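(* Let $G$ be a compact matrix quantum group with strong polynomial growth with respect to a length function $\ell$, and for $\Lambda\in\mathbb{N}$ let $A_\Lambda=\{\alpha\in\operatorname{Irred}(G):\ell(\alpha)\le\Lambda\}$. Then $(A_\Lambda)_{\Lambda\in\mathbb{N}}$ is a Følner sequence in the fusion algebra $F(G)$: for every finite nonempty $S\subseteq\operatorname{Irred}(G)$ and every $\varepsilon>0$ there is $\Lambda_0$ such that $\sum_{\xi\in\partial_S(A_\Lambda)}d(\xi)^2<\varepsilon\sum_{\xi\in A_\Lambda}d(\xi)^2$ for all $\Lambda\ge\Lambda_0$.
   Context: $\operatorname{Irred}(G)$ is a complete set of representatives of irreducible unitary corepresentations of $G$; $d(\alpha)$ is the dimension of $\alpha$, $e$ the trivial corepresentation, $\bar\alpha$ the conjugate. The fusion algebra $F(G)$ has basis $\operatorname{Irred}(G)$ with product $\alpha\beta=\sum_\gamma N^\gamma_{\alpha,\beta}\gamma$, $N^\gamma_{\alpha,\beta}$ the multiplicity of $\gamma$ in $\alpha\otimes\beta$; $\operatorname{supp}(\alpha\xi)=\{\gamma: N^\gamma_{\alpha,\xi}\ne0\}$. A length function $\ell:\operatorname{Irred}(G)\to[0,\infty)$ satisfies $\ell(e)=0$, $\ell(\bar\alpha)=\ell(\alpha)$, and $\ell(\gamma)\le\ell(\alpha)+\ell(\beta)$ whenever $N^\gamma_{\alpha,\beta}\ne0$. Strong polynomial growth w.r.t. $\ell$: there exist $c_1,c_2,s>0$ with $c_2n^s\le\sum_{\ell(\alpha)\in(n-1,n]}d(\alpha)^2\le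 c_1n^s$ for all $n\in\mathbb{N}$. For finite $S,F\subseteq\operatorname{Irred}(G)$ the boundary is $\partial_S(F)=\{\alpha\in F:\exists\xi\in S,\ \operatorname{supp}(\alpha\xi)\not\subseteq F\}\cup\{\alpha\in F^c:\exists\xi\in S,\ \operatorname{supp}(\alpha\xi)\not\subseteq F^c\}$, where $F^c=\operatorname{Irred}(G)\setminus F$. *)

theory Defs
  imports Complex_Main
begin

text \<open>The type 'a plays the role of Irred(G).  N g a b is the multiplicity N^g_{a,b}
 of g in a \<otimes> b; e is the trivial corepresentation, cbar the conjugation, d the dimension.\<close>

definition fsupp :: "('a \<Rightarrow> 'a \<Rightarrow> 'a \<Rightarrow> nat) \<Rightarrow> 'a \<Rightarrow> 'a \<Rightarrow> 'a set" where
  "fsupp N a b = {g. N g a b \<noteq> 0}"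

inductive_set generated_by :: "('a \<Rightarrow> 'a \<Rightarrow> 'a \<Rightarrow> nat) \<Rightarrow> 'a \<Rightarrow> 'a set \<Rightarrow> 'a set"
  for N e U where
  gen_e: "e \<in> generated_by N e U"
| gen_step: "a \<in> generated_by N e U \<Longrightarrow> u \<in> U \<Longrightarrow> N g a u \<noteq> 0 \<Longrightarrow> g \<in> generated_by N e U"

text \<open>Fusion rules of the irreducible corepresentations of a compact matrix quantum group:
 a based fusion ring with dimension function, Frobenius reciprocity, and finitely generated
 (every irreducible occurs in a tensor power of the fundamental corepresentation u \<oplus> conj u,
 whose irreducible constituents form the finite conjugation-closed set U).\<close>
definition cmqg_fusion :: "'a \<Rightarrow> ('a \<Rightarrow> 'a) \<Rightarrow> ('a \<Rightarrow> nat) \<Rightarrow> ('a \<Rightarrow> 'a \<Rightarrow> 'a \<Rightarrow> nat) \<Rightarrow> bool" where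
  "cmqg_fusion e cbar d N \<longleftrightarrow>
     (\<forall>a. cbar (cbar a) = a) \<and> cbar e = e \<and> d e = 1 \<and>
     (\<forall>a. d a \<ge> 1) \<and> (\<forall>a. d (cbar a) = d a) \<and>
     (\<forall>a b. finite (fsupp N a b)) \<and>
     (\<forall>a b. d a * d b = (\<Sum>g\<in>fsupp N a b. N g a b * d g)) \<and>
     (\<forall>a g. N g e a = (if g = a then 1 else 0) \<and> N g a e = (if g = a then 1 else 0)) \<and>
     (\<forall>a b g. N g a b = N a g (cbar b) \<and> N g a b = N b (cbar a) g) \<and>
     (\<forall>a b c f. (\<Sum>g\<in>fsupp N a b. N g a b * N f g c) = (\<Sum>g\<in>fsupp N b c. N g b c * N f a g)) \<and>
     (\<exists>U. finite U \<and> cbar ` U \<subseteq> U \<and> generated_by N e U = UNIV)"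

definition length_function :: "'a \<Rightarrow> ('a \<Rightarrow> 'a) \<Rightarrow> ('a \<Rightarrow> 'a \<Rightarrow> 'a \<Rightarrow> nat) \<Rightarrow> ('a \<Rightarrow> real) \<Rightarrow> bool" where
  "length_function e cbar N l \<longleftrightarrow>
     (\<forall>a. l a \<ge> 0) \<and> l e = 0 \<and> (\<forall>a. l (cbar a) = l a) \<and>
     (\<forall>a b g. N g a b \<noteq> 0 \<longrightarrow> l g \<le> l a + l b)"

definition strong_poly_growth :: "('a \<Rightarrow> nat) \<Rightarrow> ('a \<Rightarrow> real) \<Rightarrow> bool" where
  "strong_poly_growth d l \<longleftrightarrow>
     (\<exists>c1 c2 s::real. c1 > 0 \<and> c2 > 0 \<and> s > 0 \<and>
       (\<forall>n::nat. n \<ge> 1 \<longrightarrow>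
          finite {a. l a \<in> {real n - 1<..real n}} \<and>
          c2 * real n powr s \<le> (\<Sum>a\<in>{a. l a \<in> {real n - 1<..real n}}. real (d a) ^ 2) \<and>
          (\<Sum>a\<in>{a. l a \<in> {real n - 1<..real n}}. real (d a) ^ 2) \<le> c1 * real n powr s))"

definition fboundary :: "('a \<Rightarrow> 'a \<Rightarrow> 'a \<Rightarrow> nat) \<Rightarrow> 'a set \<Rightarrow> 'a set \<Rightarrow> 'a set" where
  "fboundary N S F =
     {a \<in> F. \<exists>x\<in>S. \<not> fsupp N a x \<subseteq> F} \<union> {a \<in> - F. \<exists>x\<in>S. \<not> fsupp N a x \<subseteq> - F}"

definition ball_set :: "('a \<Rightarrow> real) \<Rightarrow> nat \<Rightarrow> 'a set" where
  "ball_set l \<Lambda> = {a. l a \<le> real \<Lambda>}"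

end

theory Submission
  imports Defs
begin

text \<open>Let \<open>K\<close> bound the lengths of the elements of \<open>S\<close>. By subadditivity of the length
 and Frobenius reciprocity, the boundary of the ball of radius \<open>\<Lambda>\<close> lies in the annulus
 \<open>\<Lambda> - K < \<ell> \<le> \<Lambda> + K\<close>, made of \<open>2K\<close> unit shells, so its weight is \<open>O(\<Lambda>\<^sup>s)\<close>.
 The ball contains the \<open>\<Lambda>/2\<close> shells between radii \<open>\<Lambda>/2\<close> and \<open>\<Lambda>\<close>, each of weight
 \<open>\<ge> c\<^sub>2 (\<Lambda>/2)\<^sup>s\<close>, so its weight grows like \<open>\<Lambda>\<^sup>s\<^sup>+\<^sup>1\<close>.\<close>

definition shell :: "('a \<Rightarrow> real) \<Rightarrow> nat \<Rightarrow> 'a set" where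
  "shell l n = {a. l a \<in> {real n - 1<..real n}}"

definition annulus :: "('a \<Rightarrow> real) \<Rightarrow> nat \<Rightarrow> nat \<Rightarrow> 'a set" where
  "annulus l m n = {a. real m < l a \<and> l a \<le> real n}"

lemma shell_disjoint:
  assumes "i \<noteq> j" shows "shell l i \<inter> shell l j = {}"
  using assms by (auto simp: shell_def)

lemma annulus_eq_UN_shell: "annulus l m n = (\<Union>k\<in>{m<..n}. shell l k)"
proof (intro equalityI subsetI)
  fix a assume a: "a \<in> annulus l m n"
  define k where "k = nat \<lceil>l a\<rceil>"
  have "real k - 1 < l a" "l a \<le> real k"
    using a by (auto simp: annulus_def k_def) linarith+
  with a have "k \<in> {m<..n}" "a \<in> shell l k"
    by (auto simp: annulus_def shell_def)
  then show "a \<in> (\<Union>k\<in>{m<..n}. shell l k)" by blast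
qed (auto simp: annulus_def shell_def)

lemma ball_set_eq_annulus: "ball_set l \<Lambda> = {a. l a \<le> 0} \<union> annulus l 0 \<Lambda>"
  by (auto simp: ball_set_def annulus_def)

context
  fixes l :: "'a \<Rightarrow> real"
  assumes finite_shell: "\<And>k. k \<ge> 1 \<Longrightarrow> finite (shell l k)"
begin

lemma finite_annulus: "finite (annulus l m n)"
  unfolding annulus_eq_UN_shell using finite_shell by auto

lemma sum_annulus_eq: "(\<Sum>a\<in>annulus l m n. w a) = (\<Sum>k\<in>{m<..n}. \<Sum>a\<in>shell l k. w a)"
  unfolding annulus_eq_UN_shell
  by (rule sum.UNION_disjoint) (use finite_shell in \<open>auto simp: shell_disjoint\<close>)

lemma sum_annulus_le:
  assumes upper: "\<And>k. k \<ge> 1 \<Longrightarrow> (\<Sum>a\<in>shell l k. w a) \<le> c * real k powr s"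
    and "c \<ge> 0" "s \<ge> 0"
  shows "(\<Sum>a\<in>annulus l m n. w a) \<le> real (n - m) * c * real n powr s"
proof -
  have "(\<Sum>a\<in>annulus l m n. w a) \<le> (\<Sum>k\<in>{m<..n}. c * real n powr s)"
    unfolding sum_annulus_eq
  proof (rule sum_mono)
    fix k assume k: "k \<in> {m<..n}"
    then have "(\<Sum>a\<in>shell l k. w a) \<le> c * real k powr s" by (intro upper) auto
    also have "\<dots> \<le> c * real n powr s"
      using k assms(2,3) by (intro mult_left_mono powr_mono2) auto
    finally show "(\<Sum>a\<in>shell l k. w a) \<le> c * real n powr s" .
  qed
  then show ?thesis by simp
qed

lemma sum_annulus_ge:
  assumes lower: "\<And>k. k \<ge> 1 \<Longrightarrow> c * real k powr s \<le> (\<Sum>a\<in>shell l k. w a)"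
    and "c \<ge> 0" "s \<ge> 0"
  shows "real (n - m) * c * real m powr s \<le> (\<Sum>a\<in>annulus l m n. w a)"
proof -
  have "(\<Sum>k\<in>{m<..n}. c * real m powr s) \<le> (\<Sum>a\<in>annulus l m n. w a)"
    unfolding sum_annulus_eq
  proof (rule sum_mono)
    fix k assume k: "k \<in> {m<..n}"
    have "c * real m powr s \<le> c * real k powr s"
      using k assms(2,3) by (intro mult_left_mono powr_mono2) auto
    also have "\<dots> \<le> (\<Sum>a\<in>shell l k. w a)" using k by (intro lower) auto
    finally show "c * real m powr s \<le> (\<Sum>a\<in>shell l k. w a)" .
  qed
  then show ?thesis by simp
qed

end

lemma strong_poly_growthE:
  assumes "strong_poly_growth d l"
  obtains c1 c2 s :: real where "c1 > 0" "c2 > 0" "s > 0"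
    and "\<And>k. k \<ge> 1 \<Longrightarrow> finite (shell l k)"
    and "\<And>k. k \<ge> 1 \<Longrightarrow> c2 * real k powr s \<le> (\<Sum>a\<in>shell l k. real (d a) ^ 2)"
    and "\<And>k. k \<ge> 1 \<Longrightarrow> (\<Sum>a\<in>shell l k. real (d a) ^ 2) \<le> c1 * real k powr s"
  using assms unfolding strong_poly_growth_def shell_def by blast

lemma cmqg_fusionD:
  assumes "cmqg_fusion e cbar d N"
  shows "d a \<ge> 1" and "d a * d b = (\<Sum>g\<in>fsupp N a b. N g a b * d g)"
    and "finite (fsupp N a b)"
    and "N g a b = N a g (cbar b)" and "N g a b = N b (cbar a) g"
  using assms unfolding cmqg_fusion_def by simp_all

lemma length_functionD:
  assumes "length_function e cbar N l"
  shows "l a \<ge> 0" and "l (cbar a) = l a" and "N g a b \<noteq> 0 \<Longrightarrow> l g \<le> l a + l b"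
  using assms unfolding length_function_def by simp_all

lemma fboundary_ball_subset_annulus:
  assumes l: "length_function e cbar N l"
    and frobenius: "\<And>a b g. N g a b = N a g (cbar b)"
    and short: "\<forall>x\<in>S. l x \<le> real K" and "K \<le> \<Lambda>"
  shows "fboundary N S (ball_set l \<Lambda>) \<subseteq> annulus l (\<Lambda> - K) (\<Lambda> + K)"
proof
  fix a assume "a \<in> fboundary N S (ball_set l \<Lambda>)"
  then obtain x g where x: "x \<in> S" and g: "N g a x \<noteq> 0"
    and crossing: "l a \<le> \<Lambda> \<and> \<Lambda> < l g \<or> \<Lambda> < l a \<and> l g \<le> \<Lambda>"
    unfolding fboundary_def ball_set_def fsupp_def by (simp add: subset_iff) (meson not_le)
  have "l g \<le> l a + l x" using length_functionD(3)[OF l g] .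
  moreover have "l a \<le> l g + l x"
    using length_functionD(3)[OF l, of a g "cbar x"] g frobenius[of g a x]
    by (simp add: length_functionD(2)[OF l])
  ultimately show "a \<in> annulus l (\<Lambda> - K) (\<Lambda> + K)"
    using crossing short x \<open>K \<le> \<Lambda>\<close> by (auto simp: annulus_def of_nat_diff)
qed

lemma fsupp_nonempty:
  assumes "cmqg_fusion e cbar d N" shows "fsupp N a b \<noteq> {}"
  using cmqg_fusionD(2)[OF assms, of a b] cmqg_fusionD(1)[OF assms]
  by (metis mult_is_0 not_one_le_zero sum.empty)

text \<open>If \<open>\<ell>(z) = 0\<close> then every constituent \<open>g\<close> of \<open>a \<otimes> z\<close> has \<open>\<ell>(g) = \<ell>(a)\<close>,
 and by Frobenius reciprocity \<open>z\<close> is a constituent of \<open>cbar a \<otimes> g\<close>.\<close>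
lemma finite_length_zero:
  assumes fusion: "cmqg_fusion e cbar d N" and l: "length_function e cbar N l"
    and "finite {g. l g = l a}"
  shows "finite {z. l z = 0}"
proof -
  have "{z. l z = 0} \<subseteq> (\<Union>g\<in>{g. l g = l a}. fsupp N (cbar a) g)"
  proof
    fix z assume z: "z \<in> {z. l z = 0}"
    obtain g where g: "N g a z \<noteq> 0"
      using fsupp_nonempty[OF fusion] unfolding fsupp_def by blast
    have "l g \<le> l a + l z" using length_functionD(3)[OF l g] .
    moreover have "l a \<le> l g + l z"
      using length_functionD(3)[OF l, of a g "cbar z"] g cmqg_fusionD(4)[OF fusion, of g a z]
      by (simp add: length_functionD(2)[OF l])
    moreover have "z \<in> fsupp N (cbar a) g"
      using g cmqg_fusionD(5)[OF fusion, of g a z] by (simp add: fsupp_def)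
    ultimately show "z \<in> (\<Union>g\<in>{g. l g = l a}. fsupp N (cbar a) g)" using z by auto
  qed
  then show ?thesis
    using assms(3) cmqg_fusionD(3)[OF fusion] by (meson finite_UN_I finite_subset)
qed

lemma finite_ball_set:
  assumes "cmqg_fusion e cbar d N" "length_function e cbar N l" "strong_poly_growth d l"
  shows "finite (ball_set l \<Lambda>)"
proof -
  obtain c2 s :: real where "c2 > 0" and finite_shell: "\<And>k. k \<ge> 1 \<Longrightarrow> finite (shell l k)"
    and "\<And>k. k \<ge> 1 \<Longrightarrow> c2 * real k powr s \<le> (\<Sum>a\<in>shell l k. real (d a) ^ 2)"
    using strong_poly_growthE[OF assms(3)] by metis
  then obtain a where "a \<in> shell l 1" by fastforce
  then have "{g. l g = l a} \<subseteq> shell l 1" by (auto simp: shell_def)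
  then have "finite {z. l z = 0}"
    using finite_length_zero[OF assms(1,2)] finite_shell[of 1] finite_subset by blast
  moreover have "{a. l a \<le> 0} = {a. l a = 0}"
    using length_functionD(1)[OF assms(2)] by (simp add: order_antisym_conv)
  ultimately show ?thesis
    unfolding ball_set_eq_annulus using finite_annulus[OF finite_shell] by auto
qed

lemma strong_poly_growth_thin_annulus:
  assumes "strong_poly_growth d l" and "\<epsilon> > 0"
  shows "\<forall>\<^sub>F \<Lambda> in sequentially. (\<Sum>a\<in>annulus l (\<Lambda> - K) (\<Lambda> + K). real (d a) ^ 2)
           < \<epsilon> * (\<Sum>a\<in>annulus l (\<Lambda> div 2) \<Lambda>. real (d a) ^ 2)"
proof -
  obtain c1 c2 s :: real where c: "c1 > 0" "c2 > 0" "s > 0"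
    and finite_shell: "\<And>k. k \<ge> 1 \<Longrightarrow> finite (shell l k)"
    and lower: "\<And>k. k \<ge> 1 \<Longrightarrow> c2 * real k powr s \<le> (\<Sum>a\<in>shell l k. real (d a) ^ 2)"
    and upper: "\<And>k. k \<ge> 1 \<Longrightarrow> (\<Sum>a\<in>shell l k. real (d a) ^ 2) \<le> c1 * real k powr s"
    using strong_poly_growthE[OF assms(1)] by blast
  obtain M0 :: nat where M0: "2 * K * c1 * 6 powr s < real M0 * (\<epsilon> * c2)"
    using ex_less_of_nat_mult assms(2) c(2) by (metis mult_pos_pos)
  let ?w = "\<lambda>A. \<Sum>a\<in>A. real (d a) ^ 2"
  have "?w (annulus l (\<Lambda> - K) (\<Lambda> + K)) < \<epsilon> * ?w (annulus l (\<Lambda> div 2) \<Lambda>)"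
    if "2 * M0 + K + 2 \<le> \<Lambda>" for \<Lambda>
  proof -
    define M where "M = \<Lambda> div 2"
    have M: "M0 \<le> M" "1 \<le> M" "\<Lambda> + K \<le> 6 * M" "M \<le> \<Lambda> - M"
      using that unfolding M_def by auto
    have "?w (annulus l (\<Lambda> - K) (\<Lambda> + K)) \<le> real ((\<Lambda> + K) - (\<Lambda> - K)) * c1 * real (\<Lambda> + K) powr s"
      by (rule sum_annulus_le[OF finite_shell upper]) (use c in auto)
    also have "\<dots> \<le> 2 * K * c1 * (6 * real M) powr s"
      using M(3) c that by (auto intro!: mult_left_mono powr_mono2)
    also have "\<dots> = 2 * K * c1 * 6 powr s * real M powr s"
      by (simp add: powr_mult)
    also have "\<dots> < real M * (\<epsilon> * c2) * real M powr s"
      using M0 M(1,2) c(2) assms(2)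
      by (intro mult_strict_right_mono) (auto intro: less_le_trans mult_right_mono)
    also have "\<dots> \<le> \<epsilon> * (real (\<Lambda> - M) * c2 * real M powr s)"
      using mult_right_mono[of "real M" "real (\<Lambda> - M)" "\<epsilon> * c2 * real M powr s"] M(4) c(2) assms(2)
      by (simp add: mult_ac)
    also have "\<dots> \<le> \<epsilon> * ?w (annulus l M \<Lambda>)"
      by (rule mult_left_mono[OF sum_annulus_ge[OF finite_shell lower]]) (use c assms(2) in auto)
    finally show ?thesis unfolding M_def .
  qed
  then show ?thesis unfolding eventually_sequentially by blast
qed

theorem proposition3p5:
  fixes e :: 'a and cbar :: "'a \<Rightarrow> 'a" and d :: "'a \<Rightarrow> nat"
    and N :: "'a \<Rightarrow> 'a \<Rightarrow> 'a \<Rightarrow> nat" and l :: "'a \<Rightarrow> real"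
  assumes "cmqg_fusion e cbar d N"
    and "length_function e cbar N l"
    and "strong_poly_growth d l"
  shows "\<forall>S. finite S \<and> S \<noteq> {} \<longrightarrow> (\<forall>\<epsilon>>0. \<exists>\<Lambda>0::nat. \<forall>\<Lambda>\<ge>\<Lambda>0.
           finite (fboundary N S (ball_set l \<Lambda>)) \<and>
           (\<Sum>x\<in>fboundary N S (ball_set l \<Lambda>). real (d x) ^ 2)
             < \<epsilon> * (\<Sum>x\<in>ball_set l \<Lambda>. real (d x) ^ 2))"
proof (intro allI impI)
  fix S :: "'a set" and \<epsilon> :: real
  assume S: "finite S \<and> S \<noteq> {}" and "\<epsilon> > 0"
  define K where "K = nat \<lceil>Max (l ` S)\<rceil>"
  have short: "\<forall>x\<in>S. l x \<le> real K"
    unfolding K_def using S by (meson Max_ge finite_imageI imageI order_trans real_nat_ceiling_ge)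
  have finite_shell: "\<And>k. k \<ge> 1 \<Longrightarrow> finite (shell l k)"
    using strong_poly_growthE[OF assms(3)] by metis
  let ?w = "\<lambda>A. \<Sum>a\<in>A. real (d a) ^ 2"
  have "\<forall>\<^sub>F \<Lambda> in sequentially. K \<le> \<Lambda> \<and>
          ?w (annulus l (\<Lambda> - K) (\<Lambda> + K)) < \<epsilon> * ?w (annulus l (\<Lambda> div 2) \<Lambda>)"
    using eventually_ge_at_top strong_poly_growth_thin_annulus[OF assms(3) \<open>\<epsilon> > 0\<close>]
    by (rule eventually_conj)
  then have "\<forall>\<^sub>F \<Lambda> in sequentially. finite (fboundary N S (ball_set l \<Lambda>)) \<and>
               ?w (fboundary N S (ball_set l \<Lambda>)) < \<epsilon> * ?w (ball_set l \<Lambda>)"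
  proof (rule eventually_mono, elim conjE)
    fix \<Lambda> assume "K \<le> \<Lambda>" and thin:
      "?w (annulus l (\<Lambda> - K) (\<Lambda> + K)) < \<epsilon> * ?w (annulus l (\<Lambda> div 2) \<Lambda>)"
    have boundary: "fboundary N S (ball_set l \<Lambda>) \<subseteq> annulus l (\<Lambda> - K) (\<Lambda> + K)"
      using fboundary_ball_subset_annulus[OF assms(2) cmqg_fusionD(4)[OF assms(1)] short \<open>K \<le> \<Lambda>\<close>] .
    have "?w (fboundary N S (ball_set l \<Lambda>)) \<le> ?w (annulus l (\<Lambda> - K) (\<Lambda> + K))"
      by (rule sum_mono2[OF finite_annulus[OF finite_shell] boundary]) auto
    also note thin
    also have "\<epsilon> * ?w (annulus l (\<Lambda> div 2) \<Lambda>) \<le> \<epsilon> * ?w (ball_set l \<Lambda>)"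
      using finite_ball_set[OF assms] \<open>\<epsilon> > 0\<close>
      by (intro mult_left_mono sum_mono2) (auto simp: ball_set_def annulus_def)
    finally show "finite (fboundary N S (ball_set l \<Lambda>)) \<and>
        ?w (fboundary N S (ball_set l \<Lambda>)) < \<epsilon> * ?w (ball_set l \<Lambda>)"
      using finite_subset[OF boundary finite_annulus[OF finite_shell]] by simp
  qed
  then show "\<exists>\<Lambda>0::nat. \<forall>\<Lambda>\<ge>\<Lambda>0. finite (fboundary N S (ball_set l \<Lambda>)) \<and>
      ?w (fboundary N S (ball_set l \<Lambda>)) < \<epsilon> * ?w (ball_set l \<Lambda>)"
    unfolding eventually_sequentially .
qed

end
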